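(* Let $D$ be a finite set of $n$ training instances partitioned into $K$ disjoint nonempty clusters $D = C_1 \cup \dots \cup C_K$ with $|C_k| = n_k \ge 1$. Let $m_1,\dots,m_K > 0$ and $\lambda_1, \lambda_2 > 0$ with $m_k = \lambda_2 n_k$ for all $k$, and set $u_k = \lambda_1 m_k$. Define $v(S) = \sum_{k=1}^K u_k\, \mathbf{1}\{S \cap C_k \neq \emptyset\}$ for $S \subseteq D$. Then for every $k$ and every $i \in C_k$: (i) the Shapley value of $i$ in $(D,v)$ equals $\lambda_1\lambda_2$, independently of $k$; (ii) the Banzhaf value of $i$ in $(D,v)$ equals $\lambda_1\lambda_2\, n_k/2^{\,n_k-1}$, and the map $n_k \mapsto n_k/2^{\,n_k-1}$ is non-increasing on positive integers and strictly decreasing for $n_k \ge 2$.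
   Context: Interpretation: $m_k$ is the number of test points associated with cluster $C_k$ and $u_k$ the utility of the cluster (e.g. $\lambda_1 = 1/\sum_k m_k$ for accuracy). The Shapley value of $i$ is $\phi_i = \mathbb{E}_{\pi}[v(S_i(\pi)\cup\{i\}) - v(S_i(\pi))]$ with $\pi$ a uniformly random ordering of $D$ and $S_i(\pi)$ the players preceding $i$; the Banzhaf value is $\phi_i = 2^{-(n-1)}\sum_{S\subseteq D\setminus\{i\}}(v(S\cup\{i\})-v(S))$ where $n=|D|$. *)

theory Defs
  imports Complex_Main "HOL-Combinatorics.Multiset_Permutations"
begin

definition preceding :: "'a list \<Rightarrow> 'a \<Rightarrow> 'a set" where
  "preceding ord i = set (takeWhile (\<lambda>x. x \<noteq> i) ord)"

definition shapley :: "'a set \<Rightarrow> ('a set \<Rightarrow> real) \<Rightarrow> 'a \<Rightarrow> real" where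
  "shapley D v i =
     (\<Sum>ord\<in>permutations_of_set D. v (preceding ord i \<union> {i}) - v (preceding ord i))
       / real (card (permutations_of_set D))"

definition banzhaf :: "'a set \<Rightarrow> ('a set \<Rightarrow> real) \<Rightarrow> 'a \<Rightarrow> real" where
  "banzhaf D v i =
     (\<Sum>S\<in>Pow (D - {i}). v (S \<union> {i}) - v S) / 2 ^ (card D - 1)"

end

theory Submission
  imports Defs
begin

text \<open>
  In the cluster game the marginal contribution of a player \<open>i \<in> C\<^sub>k\<close> to a coalition \<open>S\<close>
  is \<open>u\<^sub>k\<close> if \<open>S\<close> misses \<open>C\<^sub>k\<close> and \<open>0\<close> otherwise. For the Shapley value, \<open>S\<close> is the set of
  predecessors of \<open>i\<close> in a random ordering, and \<open>S\<close> misses \<open>C\<^sub>k\<close> exactly when \<open>i\<close> comes first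
  among the members of \<open>C\<^sub>k\<close>; by the symmetry swapping \<open>i\<close> with another member this has
  probability \<open>1/n\<^sub>k\<close>, giving \<open>u\<^sub>k/n\<^sub>k = \<lambda>\<^sub>1\<lambda>\<^sub>2\<close>. For the Banzhaf value the coalitions
  of \<open>D - {i}\<close> missing \<open>C\<^sub>k\<close> are the subsets of \<open>D - C\<^sub>k\<close>, a fraction \<open>1/2^(n\<^sub>k - 1)\<close>
  of all of them.
\<close>

definition first_in :: "'a set \<Rightarrow> 'a list \<Rightarrow> 'a" where
  "first_in C xs = hd (filter (\<lambda>x. x \<in> C) xs)"

lemma preceding_disjoint_iff_first_in:
  assumes "i \<in> set xs" "i \<in> C"
  shows "preceding xs i \<inter> C = {} \<longleftrightarrow> first_in C xs = i"
  using assms unfolding preceding_def first_in_def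
  by (induction xs) auto

lemma first_in_mem:
  assumes "set xs \<inter> C \<noteq> {}"
  shows "first_in C xs \<in> C"
proof -
  have "filter (\<lambda>x. x \<in> C) xs \<noteq> []"
    using assms by (auto simp: filter_empty_conv)
  then show ?thesis
    unfolding first_in_def using hd_in_set by fastforce
qed

lemma first_in_map_transpose:
  assumes "i \<in> C" "j \<in> C" "set xs \<inter> C \<noteq> {}"
  shows "first_in C (map (transpose i j) xs) = transpose i j (first_in C xs)"
proof -
  have "filter (\<lambda>x. x \<in> C) (map (transpose i j) xs) = map (transpose i j) (filter (\<lambda>x. x \<in> C) xs)"
    using assms(1,2) by (induction xs) (auto simp: transpose_def)
  moreover have "filter (\<lambda>x. x \<in> C) xs \<noteq> []"
    using assms(3) by (auto simp: filter_empty_conv)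
  ultimately show ?thesis
    unfolding first_in_def by (simp add: hd_map)
qed

lemma map_transpose_permutations_of_set:
  assumes "xs \<in> permutations_of_set D" "i \<in> D" "j \<in> D"
  shows "map (transpose i j) xs \<in> permutations_of_set D"
  using assms by (auto simp: permutations_of_set_def distinct_map)

lemma card_first_in_eq:
  assumes "C \<subseteq> D" "i \<in> C" "j \<in> C"
  shows "card {xs \<in> permutations_of_set D. first_in C xs = j}
       = card {xs \<in> permutations_of_set D. first_in C xs = i}"
proof (rule bij_betw_same_card)
  let ?t = "map (transpose i j)"
  have meets: "set xs \<inter> C \<noteq> {}" if "xs \<in> permutations_of_set D" for xs
    using that assms by (auto dest: permutations_of_setD)
  have "?t ` {xs \<in> permutations_of_set D. first_in C xs = k}
        \<subseteq> {xs \<in> permutations_of_set D. first_in C xs = transpose i j k}" for k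
    using assms meets first_in_map_transpose map_transpose_permutations_of_set by fastforce
  from this[of j] this[of i]
  show "bij_betw ?t {xs \<in> permutations_of_set D. first_in C xs = j}
                   {xs \<in> permutations_of_set D. first_in C xs = i}"
    by (intro bij_betw_byWitness[of _ ?t]) (simp_all add: map_idI)
qed

lemma card_permutations_of_set_first_in:
  assumes "finite D" "C \<subseteq> D" "i \<in> C"
  shows "card (permutations_of_set D) = card C * card {xs \<in> permutations_of_set D. first_in C xs = i}"
proof -
  have "finite C"
    using assms finite_subset by blast
  have "first_in C xs \<in> C" if "xs \<in> permutations_of_set D" for xs
    using that assms by (intro first_in_mem) (auto dest: permutations_of_setD)
  then have "first_in C ` permutations_of_set D \<subseteq> C"
    by blast
  then have "card (permutations_of_set D)
      = (\<Sum>j\<in>C. card {xs \<in> permutations_of_set D. first_in C xs = j})"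
    using sum.group[OF _ \<open>finite C\<close>, of "permutations_of_set D" "first_in C" "\<lambda>_. 1::nat"] assms(1)
    by simp
  also have "\<dots> = card C * card {xs \<in> permutations_of_set D. first_in C xs = i}"
    using card_first_in_eq[OF assms(2,3)] by simp
  finally show ?thesis .
qed

lemma shapley_eq_if_marginal_misses_cluster:
  assumes "finite D" "C \<subseteq> D" "i \<in> C"
    and marginal: "\<And>S. v (S \<union> {i}) - v S = (if S \<inter> C = {} then w else 0)"
  shows "shapley D v i = w / card C"
proof -
  let ?P = "permutations_of_set D" and ?F = "{xs \<in> permutations_of_set D. first_in C xs = i}"
  have "(\<Sum>xs\<in>?P. v (preceding xs i \<union> {i}) - v (preceding xs i))
      = (\<Sum>xs\<in>?P. if first_in C xs = i then w else 0)"
  proof (rule sum.cong)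
    fix xs assume "xs \<in> ?P"
    then have "i \<in> set xs"
      using assms by (auto dest: permutations_of_setD)
    then show "v (preceding xs i \<union> {i}) - v (preceding xs i) = (if first_in C xs = i then w else 0)"
      using marginal preceding_disjoint_iff_first_in[OF _ \<open>i \<in> C\<close>] by simp
  qed simp
  also have "\<dots> = w * card ?F"
    using assms(1) by (simp add: sum.If_cases Int_def)
  finally have "shapley D v i = w * card ?F / (card C * card ?F)"
    unfolding shapley_def card_permutations_of_set_first_in[OF assms(1-3)] by simp
  moreover have "card ?F \<noteq> 0"
    using card_permutations_of_set_first_in[OF assms(1-3)] assms(1)
    by (metis card_permutations_of_set fact_nonzero mult_0_right)
  ultimately show ?thesis
    by simp
qed

lemma banzhaf_eq_if_marginal_misses_cluster:
  assumes "finite D" "C \<subseteq> D" "i \<in> C"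
    and marginal: "\<And>S. v (S \<union> {i}) - v S = (if S \<inter> C = {} then w else 0)"
  shows "banzhaf D v i = w / 2 ^ (card C - 1)"
proof -
  have "finite C" "card C \<ge> 1" "card C \<le> card D"
    using assms by (auto intro: finite_subset card_mono simp: Suc_le_eq card_gt_0_iff)
  have "(\<Sum>S\<in>Pow (D - {i}). v (S \<union> {i}) - v S) = (\<Sum>S\<in>Pow (D - {i}). if S \<inter> C = {} then w else 0)"
    by (simp only: marginal)
  also have "\<dots> = w * card {S \<in> Pow (D - {i}). S \<inter> C = {}}"
    using assms(1) by (simp add: sum.If_cases Int_def)
  also have "{S \<in> Pow (D - {i}). S \<inter> C = {}} = Pow (D - C)"
    using assms(3) by auto
  also have "card (Pow (D - C)) = 2 ^ (card D - card C)"
    using assms \<open>finite C\<close> by (simp add: card_Pow card_Diff_subset)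
  finally have "banzhaf D v i = w * 2 ^ (card D - card C) / (2 ^ (card D - card C) * 2 ^ (card C - 1))"
    using \<open>card C \<ge> 1\<close> \<open>card C \<le> card D\<close> unfolding banzhaf_def by (simp flip: power_add)
  then show ?thesis
    by simp
qed

lemma cluster_game_marginal:
  fixes u :: "'i \<Rightarrow> real"
  assumes "finite I" "disjoint_family_on C I" "k \<in> I" "i \<in> C k"
  defines "v \<equiv> \<lambda>S. \<Sum>j\<in>I. u j * (if S \<inter> C j \<noteq> {} then 1 else 0)"
  shows "v (S \<union> {i}) - v S = (if S \<inter> C k = {} then u k else 0)"
proof -
  have "v (S \<union> {i}) - v S
      = (\<Sum>j\<in>I. u j * ((if (S \<union> {i}) \<inter> C j \<noteq> {} then 1 else 0) - (if S \<inter> C j \<noteq> {} then 1 else 0)))"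
    unfolding v_def by (simp add: sum_subtractf[symmetric] algebra_simps)
  also have "\<dots> = (\<Sum>j\<in>I. if j = k then (if S \<inter> C k = {} then u k else 0) else 0)"
  proof (rule sum.cong)
    fix j assume "j \<in> I"
    show "u j * ((if (S \<union> {i}) \<inter> C j \<noteq> {} then 1 else 0) - (if S \<inter> C j \<noteq> {} then 1 else 0))
        = (if j = k then (if S \<inter> C k = {} then u k else 0) else 0)"
    proof (cases "j = k")
      case False
      then have "i \<notin> C j"
        using assms(2-4) \<open>j \<in> I\<close> by (auto simp: disjoint_family_on_def)
      then show ?thesis
        using False by (simp add: Int_insert_left)
    qed (use assms(4) in auto)
  qed simp
  also have "\<dots> = (if S \<inter> C k = {} then u k else 0)"
    using assms(1,3) by simp
  finally show ?thesis .
qed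

lemma n_over_two_pow_antimono:
  assumes "1 \<le> a" "a \<le> b"
  shows "real b / 2 ^ (b - 1) \<le> real a / 2 ^ (a - 1)"
proof (rule lift_Suc_antimono_le_ivl[of "{1..}"])
  show "real (Suc n) / 2 ^ (Suc n - 1) \<le> real n / 2 ^ (n - 1)" if "n \<in> {1..}" for n
    using that by (cases n) (auto simp: field_simps)
qed (use assms in auto)

lemma n_over_two_pow_strict_antimono:
  assumes "2 \<le> a" "a < b"
  shows "real b / 2 ^ (b - 1) < real a / 2 ^ (a - 1)"
proof -
  have "real b / 2 ^ (b - 1) \<le> real (Suc a) / 2 ^ (Suc a - 1)"
    by (rule n_over_two_pow_antimono) (use assms in auto)
  also have "\<dots> < real a / 2 ^ (a - 1)"
    using assms(1) by (cases a) (auto simp: field_simps)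
  finally show ?thesis .
qed

theorem mainTheorem3:
  fixes D :: "'a set" and K :: nat and C :: "nat \<Rightarrow> 'a set"
    and m :: "nat \<Rightarrow> real" and lambda1 lambda2 :: real
  assumes finD: "finite D"
    and cover: "(\<Union>k\<in>{1..K}. C k) = D"
    and disj: "\<And>k l. k \<in> {1..K} \<Longrightarrow> l \<in> {1..K} \<Longrightarrow> k \<noteq> l \<Longrightarrow> C k \<inter> C l = {}"
    and nonempty: "\<And>k. k \<in> {1..K} \<Longrightarrow> C k \<noteq> {}"
    and mpos: "\<And>k. k \<in> {1..K} \<Longrightarrow> m k > 0"
    and l1: "lambda1 > 0" and l2: "lambda2 > 0"
    and mdef: "\<And>k. k \<in> {1..K} \<Longrightarrow> m k = lambda2 * real (card (C k))"
  shows "(\<forall>k\<in>{1..K}. \<forall>i\<in>C k.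
            let v = (\<lambda>S. \<Sum>j\<in>{1..K}. (lambda1 * m j) * (if S \<inter> C j \<noteq> {} then 1 else 0))
            in shapley D v i = lambda1 * lambda2
             \<and> banzhaf D v i = lambda1 * lambda2 * real (card (C k)) / 2 ^ (card (C k) - 1))
       \<and> (\<forall>a b::nat. 1 \<le> a \<longrightarrow> a \<le> b \<longrightarrow> real b / 2 ^ (b - 1) \<le> real a / 2 ^ (a - 1))
       \<and> (\<forall>a b::nat. 2 \<le> a \<longrightarrow> a < b \<longrightarrow> real b / 2 ^ (b - 1) < real a / 2 ^ (a - 1))"
proof (intro conjI ballI allI impI)
  fix k i assume k: "k \<in> {1..K}" and i: "i \<in> C k"
  define v where "v = (\<lambda>S. \<Sum>j\<in>{1..K}. (lambda1 * m j) * (if S \<inter> C j \<noteq> {} then 1 else (0::real)))"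
  have "C k \<subseteq> D"
    using cover k by blast
  have "card (C k) \<noteq> 0"
    using nonempty[OF k] finD \<open>C k \<subseteq> D\<close> by (meson card_0_eq finite_subset)
  have disjoint: "disjoint_family_on C {1..K}"
    using disj by (auto simp: disjoint_family_on_def)
  have marginal: "v (S \<union> {i}) - v S = (if S \<inter> C k = {} then lambda1 * m k else 0)" for S
    unfolding v_def
    using cluster_game_marginal[where u = "\<lambda>j. lambda1 * m j", OF finite_atLeastAtMost disjoint k i]
    by simp
  have "shapley D v i = lambda1 * lambda2"
    using shapley_eq_if_marginal_misses_cluster[OF finD \<open>C k \<subseteq> D\<close> i marginal]
      \<open>card (C k) \<noteq> 0\<close> by (simp add: mdef[OF k])
  moreover have "banzhaf D v i = lambda1 * lambda2 * real (card (C k)) / 2 ^ (card (C k) - 1)"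
    using banzhaf_eq_if_marginal_misses_cluster[OF finD \<open>C k \<subseteq> D\<close> i marginal]
    by (simp add: mdef[OF k])
  ultimately show "let v = (\<lambda>S. \<Sum>j\<in>{1..K}. (lambda1 * m j) * (if S \<inter> C j \<noteq> {} then 1 else 0))
            in shapley D v i = lambda1 * lambda2
             \<and> banzhaf D v i = lambda1 * lambda2 * real (card (C k)) / 2 ^ (card (C k) - 1)"
    unfolding Let_def v_def[symmetric] by (rule conjI)
next
  show "real b / 2 ^ (b - 1) \<le> real a / 2 ^ (a - 1)" if "1 \<le> a" "a \<le> b" for a b :: nat
    using that by (rule n_over_two_pow_antimono)
  show "real b / 2 ^ (b - 1) < real a / 2 ^ (a - 1)" if "2 \<le> a" "a < b" for a b :: nat
    using that by (rule n_over_two_pow_strict_antimono)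
qed

end
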